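(* Let $N\ge1$, $\mathbf{S}=(\mathsf{SNR}_{s,r},\mathsf{SNR}_{s,1},\dots,\mathsf{SNR}_{s,N},\mathsf{SNR}_{r,1},\dots,\mathsf{SNR}_{r,N})\in[0,\infty)^{2N+1}$, $\rho\in[0,1]$, $\mathsf{C}(x)=\tfrac12\log(1+x)$, and for $j=1,\dots,N$ $$f_j(\rho,\mathbf{S})=\mathsf{SNR}_{s,j}+\mathsf{SNR}_{r,j}+2\rho\sqrt{\mathsf{SNR}_{s,j}\mathsf{SNR}_{r,j}},\qquad g_j(\rho,\mathbf{S})=(1-\rho^2)(\mathsf{SNR}_{s,j}+\mathsf{SNR}_{s,r}),$$ $$R_{CS}(\rho,\mathbf{S})=\min_{1\le j\le N}\min\big(\mathsf{C}(f_j(\rho,\mathbf{S})),\mathsf{C}(g_j(\rho,\mathbf{S}))\big).$$ Then $R_{CS}(\rho,\mathbf{S})$ is concave in $\rho\in[0,1]$ for fixed $\mathbf{S}$, concave in $\mathbf{S}\in[0,\infty)^{2N+1}$ for fixed $\rho$, and the map $(t,\mathbf{S})\mapsto R_{CS}(\sqrt t,\mathbf{S})$ is quasi-concave on $[0,1]\times[0,\infty)^{2N+1}$ (i.e., $R_{CS}$ is quasi-concave in $(\rho^2,\mathbf{S})$).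
   Context: $R_{CS}$ is the cut-set bound expression for a real AWGN multicast relay channel with source $s$, relay $r$, destinations $1,\dots,N$, link SNRs $\mathsf{SNR}_{u,v}\ge0$, and source–relay input correlation coefficient $\rho$. A function $F$ on a convex set is quasi-concave if $F(\lambda x_1+(1-\lambda)x_2)\ge\min(F(x_1),F(x_2))$ for all $x_1,x_2$ and $\lambda\in[0,1]$. *)

theory Defs
  imports "HOL-Analysis.Analysis"
begin

text \<open>SNR vector S = (SNR_sr, (SNR_sj)_j, (SNR_rj)_j), destinations indexed by the
  finite type 'n with CARD('n) = N (N >= 1 automatically).\<close>
type_synonym 'n snr_vec = "real \<times> (real ^ 'n) \<times> (real ^ 'n)"

definition Ccap :: "real \<Rightarrow> real" where
  "Ccap x = 1/2 * log 2 (1 + x)"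

definition f_j :: "real \<Rightarrow> ('n::finite) snr_vec \<Rightarrow> 'n \<Rightarrow> real" where
  "f_j \<rho> S j = (let (ssr, ss, sr) = S in
      ss $ j + sr $ j + 2 * \<rho> * sqrt (ss $ j * sr $ j))"

definition g_j :: "real \<Rightarrow> ('n::finite) snr_vec \<Rightarrow> 'n \<Rightarrow> real" where
  "g_j \<rho> S j = (let (ssr, ss, sr) = S in (1 - \<rho>^2) * (ss $ j + ssr))"

definition R_CS :: "real \<Rightarrow> ('n::finite) snr_vec \<Rightarrow> real" where
  "R_CS \<rho> S = Min ((\<lambda>j. min (Ccap (f_j \<rho> S j)) (Ccap (g_j \<rho> S j))) ` UNIV)"

definition snr_dom :: "('n::finite) snr_vec set" where
  "snr_dom = {(ssr, ss, sr). 0 \<le> ssr \<and> (\<forall>j. 0 \<le> ss $ j) \<and> (\<forall>j. 0 \<le> sr $ j)}"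

definition quasiconcave_on :: "'a::real_vector set \<Rightarrow> ('a \<Rightarrow> real) \<Rightarrow> bool" where
  "quasiconcave_on A F \<longleftrightarrow>
     (\<forall>x1\<in>A. \<forall>x2\<in>A. \<forall>u::real. 0 \<le> u \<and> u \<le> 1 \<longrightarrow>
        F (u *\<^sub>R x1 + (1 - u) *\<^sub>R x2) \<ge> min (F x1) (F x2))"

end

theory Submission
  imports Defs
begin

text \<open>
  Every term of \<open>R_CS\<close> is \<open>C\<close> applied to some \<open>f\<^sub>j\<close> or \<open>g\<^sub>j\<close>; since \<open>C\<close> is concave and
  increasing and minima preserve (quasi-)concavity, it suffices to treat \<open>f\<^sub>j\<close> and \<open>g\<^sub>j\<close>.
  In \<open>\<rho>\<close>, \<open>f\<^sub>j\<close> is affine and \<open>g\<^sub>j\<close> concave; in \<open>S\<close>, \<open>f\<^sub>j\<close> is concave because \<open>\<surd>(xy)\<close> is, and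
  \<open>g\<^sub>j\<close> is linear. For \<open>t = \<rho>\<^sup>2\<close>, \<open>g\<^sub>j\<close> becomes the product \<open>(1 - t)(a + c)\<close> of two nonnegative
  affine functions, which is quasi-concave. The function \<open>(t, a, b) \<mapsto> a + b + 2\<surd>(tab)\<close> is
  majorised, for every \<open>l, m > 0\<close>, by \<open>(la + mb)(l + m + \<surd>((l - m)\<^sup>2 + 4lmt)) / (2lm)\<close>, a product
  of a linear and a concave nonnegative function and hence quasi-concave, and every point with
  \<open>a, b > 0\<close> is a contact point of one of these majorants; so it is quasi-concave as well.
\<close>

lemma twice_le_add_if_square_le_mult:
  fixes x y M :: real
  assumes "0 \<le> x" "0 \<le> y" "M * M \<le> x * y"
  shows "2 * M \<le> x + y"
proof -
  have "M \<le> sqrt (M * M)" by (simp add: real_sqrt_abs')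
  also have "\<dots> \<le> sqrt (x * y)" using assms(3) by (rule real_sqrt_le_mono)
  also have "\<dots> \<le> (x + y) / 2" using assms(1,2) by (rule arith_geo_mean_sqrt)
  finally show ?thesis by simp
qed

lemma min_le_convex_comb:
  fixes x y u v :: real
  assumes "0 \<le> u" "0 \<le> v" "u + v = 1"
  shows "min x y \<le> u * x + v * y"
proof -
  have "min x y = u * min x y + v * min x y" using assms(3) by (metis distrib_right mult_1_left)
  also have "\<dots> \<le> u * x + v * y" using assms(1,2) by (intro add_mono mult_left_mono) auto
  finally show ?thesis .
qed

lemma square_convex_comb_le:
  fixes x y u v :: real
  assumes "0 \<le> u" "0 \<le> v" "u + v = 1"
  shows "(u * x + v * y)\<^sup>2 \<le> u * x\<^sup>2 + v * y\<^sup>2"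
  using convex_power_even[of 2] assms unfolding convex_on_def by simp

lemma min_mult_le_convex_comb_mult:
  fixes x1 x2 y1 y2 u v :: real
  assumes "0 \<le> x1" "0 \<le> x2" "0 \<le> y1" "0 \<le> y2" "0 \<le> u" "0 \<le> v" "u + v = 1"
  shows "min (x1 * y1) (x2 * y2) \<le> (u * x1 + v * x2) * (u * y1 + v * y2)"
proof -
  define M where "M = min (x1 * y1) (x2 * y2)"
  have "M * M \<le> (x1 * y1) * (x2 * y2)"
    using assms by (intro mult_mono) (auto simp: M_def)
  then have cross: "2 * M \<le> x1 * y2 + x2 * y1"
    using assms by (intro twice_le_add_if_square_le_mult) (auto simp: algebra_simps)
  have "M = (u + v)\<^sup>2 * M" using assms(7) by simp
  also have "\<dots> = u * u * M + v * v * M + u * v * (2 * M)" by (simp add: power2_eq_square algebra_simps)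
  also have "\<dots> \<le> u * u * (x1 * y1) + v * v * (x2 * y2) + u * v * (x1 * y2 + x2 * y1)"
    using assms cross by (intro add_mono mult_left_mono) (auto simp: M_def)
  also have "\<dots> = (u * x1 + v * x2) * (u * y1 + v * y2)" by (simp add: algebra_simps)
  finally show ?thesis unfolding M_def .
qed

lemma sqrt_mult_convex_comb_le:
  fixes a1 a2 b1 b2 u v :: real
  assumes "0 \<le> a1" "0 \<le> a2" "0 \<le> b1" "0 \<le> b2" "0 \<le> u" "0 \<le> v"
  shows "u * sqrt (a1 * b1) + v * sqrt (a2 * b2) \<le> sqrt ((u * a1 + v * a2) * (u * b1 + v * b2))"
proof (rule real_le_rsqrt)
  define A1 where "A1 = sqrt a1" define A2 where "A2 = sqrt a2"
  define B1 where "B1 = sqrt b1" define B2 where "B2 = sqrt b2"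
  have squares: "a1 = A1\<^sup>2" "a2 = A2\<^sup>2" "b1 = B1\<^sup>2" "b2 = B2\<^sup>2"
    using assms by (simp_all add: A1_def A2_def B1_def B2_def)
  have roots: "sqrt (a1 * b1) = A1 * B1" "sqrt (a2 * b2) = A2 * B2"
    by (simp_all add: A1_def A2_def B1_def B2_def real_sqrt_mult)
  have "(u * a1 + v * a2) * (u * b1 + v * b2) - (u * (A1 * B1) + v * (A2 * B2))\<^sup>2
      = u * v * (A1 * B2 - A2 * B1)\<^sup>2"
    unfolding squares by (simp add: power2_eq_square algebra_simps)
  moreover have "0 \<le> u * v * (A1 * B2 - A2 * B1)\<^sup>2" using assms by simp
  ultimately show "(u * sqrt (a1 * b1) + v * sqrt (a2 * b2))\<^sup>2 \<le> (u * a1 + v * a2) * (u * b1 + v * b2)"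
    unfolding roots by linarith
qed

lemma sqrt_convex_comb_le:
  fixes a1 a2 u v :: real
  assumes "0 \<le> a1" "0 \<le> a2" "0 \<le> u" "0 \<le> v" "u + v = 1"
  shows "u * sqrt a1 + v * sqrt a2 \<le> sqrt (u * a1 + v * a2)"
  using sqrt_mult_convex_comb_le[of a1 a2 1 1 u v] assms by simp

lemma Ccap_mono: "0 \<le> p \<Longrightarrow> p \<le> q \<Longrightarrow> Ccap p \<le> Ccap q"
  by (simp add: Ccap_def)

lemma Ccap_convex_comb_le:
  fixes p q r u v :: real
  assumes "0 \<le> p" "0 \<le> q" "0 \<le> u" "0 \<le> v" "u + v = 1" "u * p + v * q \<le> r"
  shows "u * Ccap p + v * Ccap q \<le> Ccap r"
proof -
  have "u * ln (1 + p) + v * ln (1 + q) \<le> ln (u * (1 + p) + v * (1 + q))"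
    using ln_concave assms unfolding concave_on_iff by (auto simp: add_pos_nonneg)
  also have "u * (1 + p) + v * (1 + q) = 1 + (u * p + v * q)"
    using assms(5) by (simp add: algebra_simps)
  finally have "(u * ln (1 + p) + v * ln (1 + q)) / (2 * ln 2) \<le> ln (1 + (u * p + v * q)) / (2 * ln 2)"
    by (simp add: divide_right_mono)
  then have "u * Ccap p + v * Ccap q \<le> Ccap (u * p + v * q)"
    by (simp add: Ccap_def log_def add_divide_distrib)
  also have "\<dots> \<le> Ccap r" using assms by (intro Ccap_mono) auto
  finally show ?thesis .
qed

lemma Ccap_min_le:
  assumes "0 \<le> p" "0 \<le> q" "min p q \<le> r"
  shows "min (Ccap p) (Ccap q) \<le> Ccap r"
proof -
  have "min (Ccap p) (Ccap q) \<le> Ccap (min p q)" by (simp add: min_def)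
  also have "\<dots> \<le> Ccap r" using assms by (intro Ccap_mono) auto
  finally show ?thesis .
qed

definition coherent_snr :: "real \<Rightarrow> real \<Rightarrow> real \<Rightarrow> real" where
  "coherent_snr \<rho> a b = a + b + 2 * \<rho> * sqrt (a * b)"

lemma coherent_snr_nonneg: "0 \<le> \<rho> \<Longrightarrow> 0 \<le> a \<Longrightarrow> 0 \<le> b \<Longrightarrow> 0 \<le> coherent_snr \<rho> a b"
  by (simp add: coherent_snr_def)

lemma coherent_snr_convex_comb_rho:
  assumes "u + v = 1"
  shows "coherent_snr (u * \<rho>1 + v * \<rho>2) a b = u * coherent_snr \<rho>1 a b + v * coherent_snr \<rho>2 a b"
proof -
  have v: "v = 1 - u" using assms by simp
  show ?thesis by (simp add: coherent_snr_def v algebra_simps)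
qed

lemma coherent_snr_concave:
  fixes \<rho> a1 a2 b1 b2 u v :: real
  assumes "0 \<le> \<rho>" "0 \<le> a1" "0 \<le> a2" "0 \<le> b1" "0 \<le> b2" "0 \<le> u" "0 \<le> v" "u + v = 1"
  shows "u * coherent_snr \<rho> a1 b1 + v * coherent_snr \<rho> a2 b2
      \<le> coherent_snr \<rho> (u * a1 + v * a2) (u * b1 + v * b2)"
proof -
  have "u * coherent_snr \<rho> a1 b1 + v * coherent_snr \<rho> a2 b2
      = (u * a1 + v * a2) + (u * b1 + v * b2) + 2 * \<rho> * (u * sqrt (a1 * b1) + v * sqrt (a2 * b2))"
    by (simp add: coherent_snr_def algebra_simps)
  also have "\<dots> \<le> coherent_snr \<rho> (u * a1 + v * a2) (u * b1 + v * b2)"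
    unfolding coherent_snr_def using assms
    by (intro add_left_mono mult_left_mono sqrt_mult_convex_comb_le) auto
  finally show ?thesis .
qed

definition majorant_factor :: "real \<Rightarrow> real \<Rightarrow> real \<Rightarrow> real" where
  "majorant_factor l m t = l + m + sqrt ((l - m)\<^sup>2 + 4 * l * m * t)"

lemma majorant_factor_nonneg:
  "0 < l \<Longrightarrow> 0 < m \<Longrightarrow> 0 \<le> t \<Longrightarrow> 0 \<le> majorant_factor l m t"
  by (simp add: majorant_factor_def)

lemma majorant_factor_concave:
  fixes l m t1 t2 u v :: real
  assumes "0 < l" "0 < m" "0 \<le> t1" "0 \<le> t2" "0 \<le> u" "0 \<le> v" "u + v = 1"
  shows "u * majorant_factor l m t1 + v * majorant_factor l m t2 \<le> majorant_factor l m (u * t1 + v * t2)"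
proof -
  define D where "D t = (l - m)\<^sup>2 + 4 * l * m * t" for t
  have D_nonneg: "0 \<le> D t" if "0 \<le> t" for t using assms(1,2) that by (simp add: D_def)
  have v: "v = 1 - u" using assms(7) by simp
  have "u * D t1 + v * D t2 = D (u * t1 + v * t2)" by (simp add: D_def v algebra_simps)
  then have "u * sqrt (D t1) + v * sqrt (D t2) \<le> sqrt (D (u * t1 + v * t2))"
    using sqrt_convex_comb_le[OF D_nonneg[OF assms(3)] D_nonneg[OF assms(4)] assms(5-7)] by simp
  moreover have "u * majorant_factor l m t1 + v * majorant_factor l m t2
      = (u + v) * (l + m) + (u * sqrt (D t1) + v * sqrt (D t2))"
    by (simp add: majorant_factor_def D_def algebra_simps)
  ultimately show ?thesis using assms(7) by (simp add: majorant_factor_def D_def)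
qed

lemma coherent_snr_majorant:
  fixes l m t a b :: real
  assumes "0 < l" "0 < m" "0 \<le> t" "0 \<le> a" "0 \<le> b"
  shows "2 * l * m * coherent_snr (sqrt t) a b \<le> (l * a + m * b) * majorant_factor l m t"
proof -
  define r where "r = sqrt ((l - m)\<^sup>2 + 4 * l * m * t)"
  have r_sq: "r\<^sup>2 = (l - m)\<^sup>2 + 4 * l * m * t" using assms by (simp add: r_def)
  have "sqrt ((l - m)\<^sup>2) \<le> r" unfolding r_def using assms by (intro real_sqrt_le_mono) simp
  then have "\<bar>l - m\<bar> \<le> r" by simp
  then have X: "0 \<le> l * (l - m + r)" and Y: "0 \<le> m * (m - l + r)"
    using assms by (auto simp: abs_le_iff)
  define Z where "Z = 2 * l * m * sqrt t"
  \<comment> \<open>the excess of the majorant is a quadratic form in \<open>\<surd>a, \<surd>b\<close> with determinant zero\<close>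
  have XYZ: "(l * (l - m + r)) * (m * (m - l + r)) = Z * Z"
  proof -
    have "(l * (l - m + r)) * (m * (m - l + r)) = l * m * (r\<^sup>2 - (l - m)\<^sup>2)"
      by (simp add: power2_eq_square algebra_simps)
    also have "\<dots> = Z * Z" using assms(3) unfolding r_sq Z_def by (simp add: power2_eq_square)
    finally show ?thesis .
  qed
  have "2 * (Z * sqrt (a * b)) \<le> l * (l - m + r) * a + m * (m - l + r) * b"
  proof (rule twice_le_add_if_square_le_mult)
    have "Z * sqrt (a * b) * (Z * sqrt (a * b)) = (Z * Z) * (sqrt (a * b) * sqrt (a * b))"
      by (simp only: mult_ac)
    also have "\<dots> = ((l * (l - m + r)) * (m * (m - l + r))) * (a * b)"
      using assms(4,5) by (simp add: XYZ)
    also have "\<dots> = (l * (l - m + r) * a) * (m * (m - l + r) * b)" by (simp only: mult_ac)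
    finally show "Z * sqrt (a * b) * (Z * sqrt (a * b)) \<le> (l * (l - m + r) * a) * (m * (m - l + r) * b)"
      by simp
  qed (use X Y assms in auto)
  then show ?thesis
    unfolding coherent_snr_def majorant_factor_def r_def[symmetric] Z_def
    by (simp add: algebra_simps)
qed

lemma coherent_snr_majorant_touches:
  fixes t a b :: real
  assumes "0 \<le> t" "0 < a" "0 < b"
  obtains l m where "0 < l" "0 < m"
    "2 * l * m * coherent_snr (sqrt t) a b = (l * a + m * b) * majorant_factor l m t"
proof
  define \<alpha> where "\<alpha> = sqrt a" define \<beta> where "\<beta> = sqrt b" define s where "s = sqrt t"
  define l where "l = \<beta> * (\<alpha> + s * \<beta>)"
  define m where "m = \<alpha> * (\<beta> + s * \<alpha>)"
  have pos: "0 < \<alpha>" "0 < \<beta>" "0 \<le> s" using assms by (simp_all add: \<alpha>_def \<beta>_def s_def)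
  show "0 < l" "0 < m" using pos by (simp_all add: l_def m_def add_pos_nonneg)
  have squares: "a = \<alpha>\<^sup>2" "b = \<beta>\<^sup>2" "t = s\<^sup>2" using assms by (simp_all add: \<alpha>_def \<beta>_def s_def)
  define f where "f = \<alpha>\<^sup>2 + \<beta>\<^sup>2 + 2 * s * \<alpha> * \<beta>"
  have f: "coherent_snr (sqrt t) a b = f"
    using pos by (simp add: coherent_snr_def f_def \<alpha>_def \<beta>_def s_def real_sqrt_mult)
  have "(l - m)\<^sup>2 + 4 * l * m * t = (s * f)\<^sup>2"
    unfolding squares(3) by (simp add: l_def m_def f_def power2_eq_square algebra_simps)
  then have "majorant_factor l m t = l + m + s * f"
    using pos by (simp add: majorant_factor_def f_def)
  moreover have "2 * l * m * f = (l * a + m * b) * (l + m + s * f)"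
    unfolding squares(1,2) by (simp add: l_def m_def f_def power2_eq_square algebra_simps)
  ultimately show "2 * l * m * coherent_snr (sqrt t) a b = (l * a + m * b) * majorant_factor l m t"
    by (simp only: f)
qed

lemma coherent_snr_quasiconcave_interior:
  fixes t1 t2 a1 a2 b1 b2 u v :: real
  assumes "0 \<le> t1" "0 \<le> t2" "0 \<le> a1" "0 \<le> a2" "0 \<le> b1" "0 \<le> b2" "0 \<le> u" "0 \<le> v" "u + v = 1"
    and "0 < u * a1 + v * a2" "0 < u * b1 + v * b2"
  shows "min (coherent_snr (sqrt t1) a1 b1) (coherent_snr (sqrt t2) a2 b2)
      \<le> coherent_snr (sqrt (u * t1 + v * t2)) (u * a1 + v * a2) (u * b1 + v * b2)"
proof -
  define t a b where "t = u * t1 + v * t2" and "a = u * a1 + v * a2" and "b = u * b1 + v * b2"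
  have "0 \<le> t" using assms by (simp add: t_def)
  then obtain l m where lm: "0 < l" "0 < m"
    and touch: "2 * l * m * coherent_snr (sqrt t) a b = (l * a + m * b) * majorant_factor l m t"
    using coherent_snr_majorant_touches assms(10,11) unfolding a_def b_def by blast
  let ?L = "\<lambda>a b. l * a + m * b" and ?\<psi> = "majorant_factor l m"
  have "2 * l * m * min (coherent_snr (sqrt t1) a1 b1) (coherent_snr (sqrt t2) a2 b2)
      = min (2 * l * m * coherent_snr (sqrt t1) a1 b1) (2 * l * m * coherent_snr (sqrt t2) a2 b2)"
    using lm by (simp add: min_mult_distrib_left)
  also have "\<dots> \<le> min (?L a1 b1 * ?\<psi> t1) (?L a2 b2 * ?\<psi> t2)"
    using assms lm by (intro min.mono coherent_snr_majorant) auto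
  also have "\<dots> \<le> (u * ?L a1 b1 + v * ?L a2 b2) * (u * ?\<psi> t1 + v * ?\<psi> t2)"
    using assms lm by (intro min_mult_le_convex_comb_mult majorant_factor_nonneg) auto
  also have "\<dots> \<le> ?L a b * ?\<psi> t"
  proof -
    have "u * ?L a1 b1 + v * ?L a2 b2 = ?L a b" by (simp add: a_def b_def algebra_simps)
    moreover have "0 \<le> ?L a b" using assms lm by (simp add: a_def b_def)
    ultimately show ?thesis
      using assms lm unfolding t_def by (simp add: mult_left_mono majorant_factor_concave)
  qed
  also have "\<dots> = 2 * l * m * coherent_snr (sqrt t) a b" using touch ..
  finally show ?thesis
    using lm unfolding t_def a_def b_def by (simp add: mult_le_cancel_left_pos)
qed

lemma coherent_snr_quasiconcave:
  fixes t1 t2 a1 a2 b1 b2 u v :: real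
  assumes "0 \<le> t1" "0 \<le> t2" "0 \<le> a1" "0 \<le> a2" "0 \<le> b1" "0 \<le> b2" "0 \<le> u" "0 \<le> v" "u + v = 1"
  shows "min (coherent_snr (sqrt t1) a1 b1) (coherent_snr (sqrt t2) a2 b2)
      \<le> coherent_snr (sqrt (u * t1 + v * t2)) (u * a1 + v * a2) (u * b1 + v * b2)"
proof -
  let ?f1 = "coherent_snr (sqrt t1) a1 b1" and ?f2 = "coherent_snr (sqrt t2) a2 b2"
  have min_le: "min ?f1 ?f2 \<le> u * ?f1 + v * ?f2" using assms by (intro min_le_convex_comb)
  consider "u * a1 + v * a2 = 0" | "u * b1 + v * b2 = 0" | "0 < u * a1 + v * a2" "0 < u * b1 + v * b2"
    using assms by (metis add_nonneg_nonneg mult_nonneg_nonneg order_le_less)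
  then show ?thesis
  proof cases
    case 1
    then have "u * a1 = 0" "v * a2 = 0" using assms by (simp_all add: add_nonneg_eq_0_iff)
    then have "u * ?f1 + v * ?f2 = u * b1 + v * b2" by (auto simp: coherent_snr_def algebra_simps)
    then show ?thesis using min_le 1 by (simp add: coherent_snr_def)
  next
    case 2
    then have "u * b1 = 0" "v * b2 = 0" using assms by (simp_all add: add_nonneg_eq_0_iff)
    then have "u * ?f1 + v * ?f2 = u * a1 + v * a2" by (auto simp: coherent_snr_def algebra_simps)
    then show ?thesis using min_le 2 by (simp add: coherent_snr_def)
  next
    case 3
    then show ?thesis using assms by (intro coherent_snr_quasiconcave_interior)
  qed
qed

lemma mem_snr_dom [simp]: "(ssr, ss, sr) \<in> snr_dom \<longleftrightarrow> 0 \<le> ssr \<and> (\<forall>j. 0 \<le> ss $ j) \<and> (\<forall>j. 0 \<le> sr $ j)"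
  by (simp add: snr_dom_def)

lemma convex_snr_dom: "convex snr_dom"
proof (rule convexI)
  fix x y :: "'n::finite snr_vec" and u v :: real
  assume "x \<in> snr_dom" "y \<in> snr_dom" "0 \<le> u" "0 \<le> v" "u + v = 1"
  then show "u *\<^sub>R x + v *\<^sub>R y \<in> snr_dom"
    by (cases x, cases y) auto
qed

lemma f_j_eq [simp]: "f_j \<rho> (ssr, ss, sr) j = coherent_snr \<rho> (ss $ j) (sr $ j)"
  by (simp add: f_j_def coherent_snr_def)

lemma g_j_eq [simp]: "g_j \<rho> (ssr, ss, sr) j = (1 - \<rho>\<^sup>2) * (ss $ j + ssr)"
  by (simp add: g_j_def)

lemma f_j_nonneg: "0 \<le> \<rho> \<Longrightarrow> S \<in> snr_dom \<Longrightarrow> 0 \<le> f_j \<rho> S j"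
  by (cases S) (auto intro: coherent_snr_nonneg)

lemma g_j_nonneg: "\<bar>\<rho>\<bar> \<le> 1 \<Longrightarrow> S \<in> snr_dom \<Longrightarrow> 0 \<le> g_j \<rho> S j"
  by (cases S) (auto simp: abs_square_le_1)

lemma R_CS_le: "R_CS \<rho> S \<le> min (Ccap (f_j \<rho> S j)) (Ccap (g_j \<rho> S j))"
  unfolding R_CS_def by (rule Min_le) auto

lemma R_CS_greatest:
  "(\<And>j. x \<le> min (Ccap (f_j \<rho> S j)) (Ccap (g_j \<rho> S j))) \<Longrightarrow> x \<le> R_CS \<rho> S"
  unfolding R_CS_def by (intro Min.boundedI) auto

lemma R_CS_convex_comb_le:
  assumes "0 \<le> u" "0 \<le> v"
    and "\<And>j. u * Ccap (f_j \<rho>1 S1 j) + v * Ccap (f_j \<rho>2 S2 j) \<le> Ccap (f_j \<rho> S j)"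
    and "\<And>j. u * Ccap (g_j \<rho>1 S1 j) + v * Ccap (g_j \<rho>2 S2 j) \<le> Ccap (g_j \<rho> S j)"
  shows "u * R_CS \<rho>1 S1 + v * R_CS \<rho>2 S2 \<le> R_CS \<rho> S"
proof (rule R_CS_greatest)
  fix j
  have "u * R_CS \<rho>1 S1 + v * R_CS \<rho>2 S2
      \<le> u * min (Ccap (f_j \<rho>1 S1 j)) (Ccap (g_j \<rho>1 S1 j)) + v * min (Ccap (f_j \<rho>2 S2 j)) (Ccap (g_j \<rho>2 S2 j))"
    using assms(1,2) by (intro add_mono mult_left_mono R_CS_le)
  also have "\<dots> \<le> min (Ccap (f_j \<rho> S j)) (Ccap (g_j \<rho> S j))"
  proof (rule min.boundedI)
    show "u * min (Ccap (f_j \<rho>1 S1 j)) (Ccap (g_j \<rho>1 S1 j)) + v * min (Ccap (f_j \<rho>2 S2 j)) (Ccap (g_j \<rho>2 S2 j))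
        \<le> Ccap (f_j \<rho> S j)"
      using assms(1,2) by (intro order.trans[OF add_mono assms(3)] mult_left_mono) auto
    show "u * min (Ccap (f_j \<rho>1 S1 j)) (Ccap (g_j \<rho>1 S1 j)) + v * min (Ccap (f_j \<rho>2 S2 j)) (Ccap (g_j \<rho>2 S2 j))
        \<le> Ccap (g_j \<rho> S j)"
      using assms(1,2) by (intro order.trans[OF add_mono assms(4)] mult_left_mono) auto
  qed
  finally show "u * R_CS \<rho>1 S1 + v * R_CS \<rho>2 S2 \<le> min (Ccap (f_j \<rho> S j)) (Ccap (g_j \<rho> S j))" .
qed

lemma R_CS_min_le:
  assumes "\<And>j. min (Ccap (f_j \<rho>1 S1 j)) (Ccap (f_j \<rho>2 S2 j)) \<le> Ccap (f_j \<rho> S j)"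
    and "\<And>j. min (Ccap (g_j \<rho>1 S1 j)) (Ccap (g_j \<rho>2 S2 j)) \<le> Ccap (g_j \<rho> S j)"
  shows "min (R_CS \<rho>1 S1) (R_CS \<rho>2 S2) \<le> R_CS \<rho> S"
proof (rule R_CS_greatest)
  fix j
  show "min (R_CS \<rho>1 S1) (R_CS \<rho>2 S2) \<le> min (Ccap (f_j \<rho> S j)) (Ccap (g_j \<rho> S j))"
    using R_CS_le[of \<rho>1 S1 j] R_CS_le[of \<rho>2 S2 j] assms[of j] by linarith
qed

lemma R_CS_concave_rho:
  fixes S :: "'n::finite snr_vec"
  assumes "S \<in> snr_dom"
  shows "concave_on {0..1} (\<lambda>\<rho>. R_CS \<rho> S)"
  unfolding concave_on_iff
proof (intro conjI ballI allI impI)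
  obtain ssr ss sr where S: "S = (ssr, ss, sr)" by (cases S)
  fix \<rho>1 \<rho>2 u v :: real
  assume \<rho>: "\<rho>1 \<in> {0..1}" "\<rho>2 \<in> {0..1}" and uv: "0 \<le> u" "0 \<le> v" "u + v = 1"
  have c: "0 \<le> ss $ j + ssr" for j using assms by (simp add: S)
  show "u * R_CS \<rho>1 S + v * R_CS \<rho>2 S \<le> R_CS (u *\<^sub>R \<rho>1 + v *\<^sub>R \<rho>2) S"
  proof (rule R_CS_convex_comb_le[OF uv(1,2)])
    fix j
    show "u * Ccap (f_j \<rho>1 S j) + v * Ccap (f_j \<rho>2 S j) \<le> Ccap (f_j (u *\<^sub>R \<rho>1 + v *\<^sub>R \<rho>2) S j)"
      using \<rho> uv assms by (intro Ccap_convex_comb_le f_j_nonneg)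
        (auto simp: S coherent_snr_convex_comb_rho)
    have v: "v = 1 - u" using uv(3) by simp
    have "u * g_j \<rho>1 S j + v * g_j \<rho>2 S j = (1 - (u * \<rho>1\<^sup>2 + v * \<rho>2\<^sup>2)) * (ss $ j + ssr)"
      by (simp add: S v algebra_simps)
    also have "\<dots> \<le> g_j (u *\<^sub>R \<rho>1 + v *\<^sub>R \<rho>2) S j"
      using square_convex_comb_le[OF uv, of \<rho>1 \<rho>2] c by (simp add: S mult_right_mono)
    finally show "u * Ccap (g_j \<rho>1 S j) + v * Ccap (g_j \<rho>2 S j) \<le> Ccap (g_j (u *\<^sub>R \<rho>1 + v *\<^sub>R \<rho>2) S j)"
      using \<rho> uv assms by (intro Ccap_convex_comb_le g_j_nonneg) auto
  qed
qed simp

lemma R_CS_concave_snr: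
  assumes "0 \<le> \<rho>" "\<rho> \<le> 1"
  shows "concave_on (snr_dom :: 'n::finite snr_vec set) (\<lambda>S. R_CS \<rho> S)"
  unfolding concave_on_iff
proof (intro conjI ballI allI impI convex_snr_dom)
  fix S1 S2 :: "'n snr_vec" and u v :: real
  assume S: "S1 \<in> snr_dom" "S2 \<in> snr_dom" and uv: "0 \<le> u" "0 \<le> v" "u + v = 1"
  obtain a1 b1 c1 a2 b2 c2 where S_eq: "S1 = (a1, b1, c1)" "S2 = (a2, b2, c2)"
    by (cases S1, cases S2)
  show "u * R_CS \<rho> S1 + v * R_CS \<rho> S2 \<le> R_CS \<rho> (u *\<^sub>R S1 + v *\<^sub>R S2)"
  proof (rule R_CS_convex_comb_le[OF uv(1,2)])
    fix j
    show "u * Ccap (f_j \<rho> S1 j) + v * Ccap (f_j \<rho> S2 j) \<le> Ccap (f_j \<rho> (u *\<^sub>R S1 + v *\<^sub>R S2) j)"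
      using S uv assms by (intro Ccap_convex_comb_le f_j_nonneg)
        (auto simp: S_eq intro: coherent_snr_concave)
    show "u * Ccap (g_j \<rho> S1 j) + v * Ccap (g_j \<rho> S2 j) \<le> Ccap (g_j \<rho> (u *\<^sub>R S1 + v *\<^sub>R S2) j)"
      using S uv assms by (intro Ccap_convex_comb_le g_j_nonneg) (auto simp: S_eq algebra_simps)
  qed
qed

lemma R_CS_quasiconcave_rho_square:
  "quasiconcave_on ({0..1} \<times> (snr_dom :: 'n::finite snr_vec set)) (\<lambda>(t, S). R_CS (sqrt t) S)"
  unfolding quasiconcave_on_def
proof (intro ballI allI impI)
  fix x1 x2 :: "real \<times> 'n snr_vec" and u :: real
  assume x: "x1 \<in> {0..1} \<times> snr_dom" "x2 \<in> {0..1} \<times> snr_dom" and u: "0 \<le> u \<and> u \<le> 1"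
  obtain t1 a1 b1 c1 t2 a2 b2 c2 where x_eq: "x1 = (t1, a1, b1, c1)" "x2 = (t2, a2, b2, c2)"
    by (cases x1, cases x2)
  define v where "v = 1 - u"
  have uv: "0 \<le> u" "0 \<le> v" "u + v = 1" using u by (simp_all add: v_def)
  have t: "0 \<le> t1" "t1 \<le> 1" "0 \<le> t2" "t2 \<le> 1" using x by (simp_all add: x_eq)
  have nonneg: "0 \<le> a1" "0 \<le> a2" "0 \<le> b1 $ j" "0 \<le> b2 $ j" "0 \<le> c1 $ j" "0 \<le> c2 $ j" for j
    using x by (simp_all add: x_eq)
  have "min (R_CS (sqrt t1) (a1, b1, c1)) (R_CS (sqrt t2) (a2, b2, c2))
      \<le> R_CS (sqrt (u * t1 + v * t2)) (u *\<^sub>R (a1, b1, c1) + v *\<^sub>R (a2, b2, c2))"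
  proof (rule R_CS_min_le)
    fix j
    show "min (Ccap (f_j (sqrt t1) (a1, b1, c1) j)) (Ccap (f_j (sqrt t2) (a2, b2, c2) j))
        \<le> Ccap (f_j (sqrt (u * t1 + v * t2)) (u *\<^sub>R (a1, b1, c1) + v *\<^sub>R (a2, b2, c2)) j)"
      using t nonneg uv by (auto intro!: Ccap_min_le coherent_snr_nonneg coherent_snr_quasiconcave)
    have "min ((1 - t1) * (b1 $ j + a1)) ((1 - t2) * (b2 $ j + a2))
        \<le> (u * (1 - t1) + v * (1 - t2)) * (u * (b1 $ j + a1) + v * (b2 $ j + a2))"
      using t nonneg uv by (intro min_mult_le_convex_comb_mult) auto
    also have "\<dots> = (1 - (u * t1 + v * t2)) * ((u * b1 $ j + v * b2 $ j) + (u * a1 + v * a2))"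
      by (simp add: v_def algebra_simps)
    finally show "min (Ccap (g_j (sqrt t1) (a1, b1, c1) j)) (Ccap (g_j (sqrt t2) (a2, b2, c2) j))
        \<le> Ccap (g_j (sqrt (u * t1 + v * t2)) (u *\<^sub>R (a1, b1, c1) + v *\<^sub>R (a2, b2, c2)) j)"
      using t nonneg uv by (intro Ccap_min_le) auto
  qed
  then show "min ((\<lambda>(t, S). R_CS (sqrt t) S) x1) ((\<lambda>(t, S). R_CS (sqrt t) S) x2)
      \<le> (\<lambda>(t, S). R_CS (sqrt t) S) (u *\<^sub>R x1 + (1 - u) *\<^sub>R x2)"
    by (simp add: x_eq v_def)
qed

theorem theorem1:
  shows "(\<forall>S::('n::finite) snr_vec. S \<in> snr_dom \<longrightarrow> concave_on {0..1} (\<lambda>\<rho>. R_CS \<rho> S))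
       \<and> (\<forall>\<rho>::real. 0 \<le> \<rho> \<and> \<rho> \<le> 1 \<longrightarrow> concave_on (snr_dom :: 'n snr_vec set) (\<lambda>S. R_CS \<rho> S))
       \<and> quasiconcave_on ({0..1} \<times> (snr_dom :: 'n snr_vec set)) (\<lambda>(t, S). R_CS (sqrt t) S)"
  using R_CS_concave_rho R_CS_concave_snr R_CS_quasiconcave_rho_square by blast

end
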